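(* Let $\Omega$ be a finite set and let $\mathcal{F}_{+}$ denote the set of nonnegative, increasing set functions $f:2^{\Omega}\to\mathbb{R}$. Let $\zeta:\mathcal{F}_{+}\to\mathbb{R}$ be any one of the following: (I) $\zeta[f]=\mathcal{E}[f]$; (II) $\zeta[f]=D[f]$; (III) $\zeta[f]=d^{\ell,k}[f]$ for some fixed $\ell\in\{0,\dots,|\Omega|-1\}$, $k\in\{0,\dots,|\Omega|\}$; (IV) $\zeta[f]=\Delta^{L,K}[f]$ for some fixed $L\in\{0,\dots,|\Omega|-1\}$, $K\in\{1,\dots,|\Omega|\}$. Then: (i) $\zeta$ is sublinear: for all $f_1,f_2\in\mathcal{F}_{+}$, $\zeta[f_1]+\zeta[f_2]\ge\zeta[f_1+f_2]$, and for all $f\in\mathcal{F}_{+}$ and $\alpha\in\mathbb{R}_{+}$, $\alpha\zeta[f]=\zeta[\alpha f]$. (ii) In cases (I), (II), (III): if $f\in\mathcal{F}_{+}$ is not submodular, then for any $\epsilon\in[0,\zeta[f])$ there does not exist a nonnegative, increasing, submodular function $g:2^{\Omega}\to\mathbb{R}$ with $\|g-f\|_{\infty}<\epsilon/4$.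
   Context: A set function $f$ is increasing if $f(\mathcal{A})\le f(\mathcal{B})$ whenever $\mathcal{A}\subseteq\mathcal{B}$; it is submodular if $f(\mathcal{A}\cup\mathcal{B})+f(\mathcal{A}\cap\mathcal{B})\le f(\mathcal{A})+f(\mathcal{B})$ for all $\mathcal{A},\mathcal{B}\subseteq\Omega$. Definitions: $\mathcal{E}[f]=\max_{\mathcal{A},\mathcal{B}\subseteq\Omega} f(\mathcal{A}\cup\mathcal{B})+f(\mathcal{A}\cap\mathcal{B})-f(\mathcal{A})-f(\mathcal{B})$. For $\ell\in\{0,\dots,|\Omega|-1\}$, $k\in\{0,\dots,|\Omega|\}$, $d^{\ell,k}[f]=\max\{f(\mathcal{A}\cup\mathcal{B}\cup\{s\})-f(\mathcal{A}\cup\mathcal{B})-f(\mathcal{A}\cup\{s\})+f(\mathcal{A}) : \mathcal{A},\mathcal{B}\subseteq\Omega, s\in\Omega, |\mathcal{A}|=\ell,|\mathcal{B}|=k\}$. $D[f]=\max\{d^{\ell,k}[f]:\ell\in\{0,\dots,|\Omega|-1\},k\in\{0,\dots,|\Omega|\}\}$. For $K\in\{1,\dots,|\Omega|\}$, $\delta^{\ell,K}[f]=\sum_{k=0}^{K-1}d^{\ell,k}[f]$, and $\Delta^{L,K}[f]=\max_{\ell\in\{0,\dots,L\}}\delta^{\ell,K}[f]$. $\|h\|_\infty=\max_{\mathcal{S}\subseteq\Omega}|h(\mathcal{S})|$. *)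

theory Defs
  imports Complex_Main
begin

text \<open>Ground set Omega = UNIV of a finite type 'a; set functions are 'a set => real.\<close>

definition increasing_sf :: "('a set \<Rightarrow> real) \<Rightarrow> bool" where
  "increasing_sf f \<longleftrightarrow> (\<forall>A B. A \<subseteq> B \<longrightarrow> f A \<le> f B)"

definition submodular_sf :: "('a set \<Rightarrow> real) \<Rightarrow> bool" where
  "submodular_sf f \<longleftrightarrow> (\<forall>A B. f (A \<union> B) + f (A \<inter> B) \<le> f A + f B)"

definition nonneg_sf :: "('a set \<Rightarrow> real) \<Rightarrow> bool" where
  "nonneg_sf f \<longleftrightarrow> (\<forall>S. 0 \<le> f S)"

definition Fplus :: "('a set \<Rightarrow> real) \<Rightarrow> bool" where
  "Fplus f \<longleftrightarrow> nonneg_sf f \<and> increasing_sf f"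

definition Esub :: "('a::finite set \<Rightarrow> real) \<Rightarrow> real" where
  "Esub f = Max {f (A \<union> B) + f (A \<inter> B) - f A - f B | A B. True}"

definition dlk :: "nat \<Rightarrow> nat \<Rightarrow> ('a::finite set \<Rightarrow> real) \<Rightarrow> real" where
  "dlk l k f = Max {f (A \<union> B \<union> {s}) - f (A \<union> B) - f (A \<union> {s}) + f A
                    | A B s. card A = l \<and> card B = k}"

definition Dsub :: "('a::finite set \<Rightarrow> real) \<Rightarrow> real" where
  "Dsub f = Max {dlk l k f | l k. l < card (UNIV::'a set) \<and> k \<le> card (UNIV::'a set)}"

definition deltaLK :: "nat \<Rightarrow> nat \<Rightarrow> ('a::finite set \<Rightarrow> real) \<Rightarrow> real" where
  "deltaLK l K f = (\<Sum>k<K. dlk l k f)"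

definition DeltaLK :: "nat \<Rightarrow> nat \<Rightarrow> ('a::finite set \<Rightarrow> real) \<Rightarrow> real" where
  "DeltaLK L K f = Max {deltaLK l K f | l. l \<le> L}"

definition supnorm :: "('a::finite set \<Rightarrow> real) \<Rightarrow> real" where
  "supnorm h = Max ((\<lambda>S. \<bar>h S\<bar>) ` UNIV)"

end

theory Submission
  imports Defs
begin

text \<open>Each quantity is a maximum over a finite nonempty index set of (sums of) defects
  \<open>f P + f Q - f R - f S\<close>. A defect is linear in \<open>f\<close>, and maxima and sums of linear
  functionals are sublinear; this needs no hypothesis on \<open>f\<close> at all. Replacing \<open>f\<close> by \<open>g\<close>
  changes a defect by at most \<open>4 * supnorm (g - f)\<close>, and the defects defining \<open>Esub\<close> and
  \<open>dlk\<close> are nonpositive for submodular increasing \<open>g\<close>, so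
  \<open>\<zeta> f \<le> 4 * supnorm (g - f)\<close>.\<close>

lemma Max_image_le_Max_image_add:
  fixes F G H :: "'i \<Rightarrow> real"
  assumes "finite I" "I \<noteq> {}" "\<And>i. i \<in> I \<Longrightarrow> H i \<le> F i + G i"
  shows "Max (H ` I) \<le> Max (F ` I) + Max (G ` I)"
proof -
  have "H i \<le> Max (F ` I) + Max (G ` I)" if "i \<in> I" for i
  proof -
    have "F i \<le> Max (F ` I)" "G i \<le> Max (G ` I)" using that assms(1) by auto
    then show ?thesis using assms(3)[OF that] by linarith
  qed
  then show ?thesis using assms by (simp add: Max_le_iff)
qed

lemma Max_image_le_Max_image_plus:
  fixes F G :: "'i \<Rightarrow> real"
  assumes "finite I" "I \<noteq> {}" "\<And>i. i \<in> I \<Longrightarrow> F i \<le> G i + c"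
  shows "Max (F ` I) \<le> Max (G ` I) + c"
  using Max_image_le_Max_image_add[of I F G "\<lambda>_. c"] assms by (simp add: image_constant_conv)

lemma mult_Max_image:
  fixes F :: "'i \<Rightarrow> real"
  assumes "finite I" "I \<noteq> {}" "0 \<le> \<alpha>"
  shows "\<alpha> * Max (F ` I) = Max ((\<lambda>i. \<alpha> * F i) ` I)"
proof -
  have "mono ((*) \<alpha>)" using assms(3) by (simp add: mono_def mult_left_mono)
  then show ?thesis using mono_Max_commute[of "(*) \<alpha>" "F ` I"] assms by (simp add: image_image)
qed

definition sublinear :: "(('b \<Rightarrow> real) \<Rightarrow> real) \<Rightarrow> bool" where
  "sublinear \<zeta> \<longleftrightarrow> (\<forall>f g. \<zeta> (\<lambda>x. f x + g x) \<le> \<zeta> f + \<zeta> g)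
                    \<and> (\<forall>f \<alpha>. 0 \<le> \<alpha> \<longrightarrow> \<alpha> * \<zeta> f = \<zeta> (\<lambda>x. \<alpha> * f x))"

lemma sublinear_Max:
  assumes "finite I" "I \<noteq> {}" "\<And>i. i \<in> I \<Longrightarrow> sublinear (\<phi> i)"
  shows "sublinear (\<lambda>f. Max ((\<lambda>i. \<phi> i f) ` I))"
  unfolding sublinear_def
proof (intro conjI allI impI)
  fix f g :: "'b \<Rightarrow> real"
  show "Max ((\<lambda>i. \<phi> i (\<lambda>x. f x + g x)) ` I) \<le> Max ((\<lambda>i. \<phi> i f) ` I) + Max ((\<lambda>i. \<phi> i g) ` I)"
    using assms by (intro Max_image_le_Max_image_add) (auto simp: sublinear_def)
next
  fix f :: "'b \<Rightarrow> real" and \<alpha> :: real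
  assume "0 \<le> \<alpha>"
  then have "Max ((\<lambda>i. \<phi> i (\<lambda>x. \<alpha> * f x)) ` I) = Max ((\<lambda>i. \<alpha> * \<phi> i f) ` I)"
    using assms(3) by (intro arg_cong[where f = Max] image_cong) (auto simp: sublinear_def)
  with \<open>0 \<le> \<alpha>\<close> assms(1,2) show "\<alpha> * Max ((\<lambda>i. \<phi> i f) ` I) = Max ((\<lambda>i. \<phi> i (\<lambda>x. \<alpha> * f x)) ` I)"
    by (simp add: mult_Max_image)
qed

lemma sublinear_sum:
  assumes "\<And>i. i \<in> I \<Longrightarrow> sublinear (\<phi> i)"
  shows "sublinear (\<lambda>f. \<Sum>i\<in>I. \<phi> i f)"
  using assms unfolding sublinear_def
  by (auto simp: sum.distrib[symmetric] sum_distrib_left intro: sum_mono)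

definition defect :: "('a set \<Rightarrow> real) \<Rightarrow> 'a set \<Rightarrow> 'a set \<Rightarrow> 'a set \<Rightarrow> 'a set \<Rightarrow> real" where
  "defect f P Q R S = f P + f Q - f R - f S"

lemma sublinear_defect: "sublinear (\<lambda>f. defect f P Q R S)"
  unfolding sublinear_def defect_def by (simp add: algebra_simps)

lemma supnorm_ge: "\<bar>h S\<bar> \<le> supnorm h"
  unfolding supnorm_def by (rule Max_ge) auto

lemma defect_le_defect_plus_supnorm:
  "defect f P Q R S \<le> defect g P Q R S + 4 * supnorm (\<lambda>S. g S - f S)"
  using supnorm_ge[of "\<lambda>S. g S - f S" P] supnorm_ge[of "\<lambda>S. g S - f S" Q]
    supnorm_ge[of "\<lambda>S. g S - f S" R] supnorm_ge[of "\<lambda>S. g S - f S" S]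
  unfolding defect_def by (simp add: abs_le_iff)

lemma Esub_eq_Max_defect:
  "Esub f = Max ((\<lambda>(A, B). defect f (A \<union> B) (A \<inter> B) A B) ` UNIV)"
  unfolding Esub_def defect_def by (rule arg_cong[where f = Max]) auto

definition dlk_index :: "nat \<Rightarrow> nat \<Rightarrow> ('a set \<times> 'a set \<times> 'a) set" where
  "dlk_index l k = {(A, B, s). card A = l \<and> card B = k}"

lemma dlk_eq_Max_defect:
  "dlk l k f = Max ((\<lambda>(A, B, s). defect f (A \<union> B \<union> {s}) A (A \<union> B) (A \<union> {s})) ` dlk_index l k)"
  unfolding dlk_def defect_def dlk_index_def by (rule arg_cong[where f = Max]) force

lemma dlk_index_nonempty:
  assumes "l \<le> card (UNIV :: 'a::finite set)" "k \<le> card (UNIV :: 'a set)"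
  shows "dlk_index l k \<noteq> ({} :: ('a set \<times> 'a set \<times> 'a) set)"
proof -
  obtain A B :: "'a set" where "card A = l" "card B = k"
    using obtain_subset_with_card_n assms by metis
  then have "(A, B, undefined) \<in> dlk_index l k" unfolding dlk_index_def by simp
  then show ?thesis by blast
qed

lemma Dsub_eq_Max_dlk:
  "Dsub f = Max ((\<lambda>(l, k). dlk l k f) ` ({..<card (UNIV :: 'a set)} \<times> {..card (UNIV :: 'a set)}))"
  for f :: "'a::finite set \<Rightarrow> real"
  unfolding Dsub_def by (rule arg_cong[where f = Max]) force

lemma DeltaLK_eq_Max_deltaLK: "DeltaLK L K f = Max ((\<lambda>l. deltaLK l K f) ` {..L})"
  unfolding DeltaLK_def by (rule arg_cong[where f = Max]) force

lemma sublinear_Esub: "sublinear (Esub :: ('a::finite set \<Rightarrow> real) \<Rightarrow> real)"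
  unfolding Esub_eq_Max_defect[abs_def] case_prod_beta
  by (rule sublinear_Max) (auto intro: sublinear_defect)

lemma sublinear_dlk:
  assumes "l \<le> card (UNIV :: 'a::finite set)" "k \<le> card (UNIV :: 'a set)"
  shows "sublinear (dlk l k :: ('a set \<Rightarrow> real) \<Rightarrow> real)"
  unfolding dlk_eq_Max_defect[abs_def] case_prod_beta
  using dlk_index_nonempty[OF assms] by (intro sublinear_Max) (auto intro: sublinear_defect)

lemma sublinear_Dsub: "sublinear (Dsub :: ('a::finite set \<Rightarrow> real) \<Rightarrow> real)"
  unfolding Dsub_eq_Max_dlk[abs_def] case_prod_beta
  by (rule sublinear_Max) (auto intro: sublinear_dlk simp: lessThan_empty_iff)

lemma sublinear_DeltaLK:
  assumes "L < card (UNIV :: 'a::finite set)" "K \<le> card (UNIV :: 'a set)"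
  shows "sublinear (DeltaLK L K :: ('a set \<Rightarrow> real) \<Rightarrow> real)"
  unfolding DeltaLK_eq_Max_deltaLK[abs_def] deltaLK_def
  using assms by (intro sublinear_Max sublinear_sum sublinear_dlk) auto

lemma submodular_increasing_marginal_antimono:
  assumes "submodular_sf g" "increasing_sf g" "A \<subseteq> A'"
  shows "g (A' \<union> X) - g A' \<le> g (A \<union> X) - g A"
proof -
  have "g (A' \<union> (A \<union> X)) + g (A' \<inter> (A \<union> X)) \<le> g A' + g (A \<union> X)"
    using assms(1) unfolding submodular_sf_def by blast
  moreover have "A' \<union> (A \<union> X) = A' \<union> X" using assms(3) by blast
  moreover have "g A \<le> g (A' \<inter> (A \<union> X))"
    using assms(2,3) unfolding increasing_sf_def by auto
  ultimately show ?thesis by simp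
qed

lemma Esub_le_supnorm:
  assumes "submodular_sf g"
  shows "Esub f \<le> 4 * supnorm (\<lambda>S. g S - f S)"
proof -
  have "Esub f \<le> Esub g + 4 * supnorm (\<lambda>S. g S - f S)"
    unfolding Esub_eq_Max_defect
    by (rule Max_image_le_Max_image_plus) (auto intro: defect_le_defect_plus_supnorm)
  moreover have "Esub g \<le> 0"
    using assms unfolding Esub_eq_Max_defect submodular_sf_def defect_def
    by (auto simp: Max_le_iff algebra_simps)
  ultimately show ?thesis by linarith
qed

lemma dlk_le_supnorm:
  fixes f g :: "'a::finite set \<Rightarrow> real"
  assumes "l \<le> card (UNIV :: 'a set)" "k \<le> card (UNIV :: 'a set)"
    and "submodular_sf g" "increasing_sf g"
  shows "dlk l k f \<le> 4 * supnorm (\<lambda>S. g S - f S)"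
proof -
  note nonempty = dlk_index_nonempty[OF assms(1,2)]
  have "dlk l k f \<le> dlk l k g + 4 * supnorm (\<lambda>S. g S - f S)"
    unfolding dlk_eq_Max_defect using nonempty
    by (intro Max_image_le_Max_image_plus) (auto intro: defect_le_defect_plus_supnorm)
  moreover have "defect g (A \<union> B \<union> {s}) A (A \<union> B) (A \<union> {s}) \<le> 0" for A B s
    using submodular_increasing_marginal_antimono[OF assms(3,4), of A "A \<union> B" "{s}"]
    unfolding defect_def by simp
  then have "dlk l k g \<le> 0"
    unfolding dlk_eq_Max_defect using nonempty by (auto simp: Max_le_iff)
  ultimately show ?thesis by linarith
qed

lemma Dsub_le_supnorm:
  fixes f g :: "'a::finite set \<Rightarrow> real"
  assumes "submodular_sf g" "increasing_sf g"
  shows "Dsub f \<le> 4 * supnorm (\<lambda>S. g S - f S)"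
  unfolding Dsub_eq_Max_dlk using assms
  by (subst Max_le_iff) (auto simp: lessThan_empty_iff intro!: dlk_le_supnorm)

theorem mainTheorem1:
  fixes \<zeta> :: "('a::finite set \<Rightarrow> real) \<Rightarrow> real"
  assumes cases: "\<zeta> = Esub \<or> \<zeta> = Dsub
     \<or> (\<exists>l k. l < card (UNIV::'a set) \<and> k \<le> card (UNIV::'a set) \<and> \<zeta> = dlk l k)
     \<or> (\<exists>L K. L < card (UNIV::'a set) \<and> 1 \<le> K \<and> K \<le> card (UNIV::'a set) \<and> \<zeta> = DeltaLK L K)"
  shows "(\<forall>f1 f2. Fplus f1 \<longrightarrow> Fplus f2 \<longrightarrow> \<zeta> (\<lambda>S. f1 S + f2 S) \<le> \<zeta> f1 + \<zeta> f2)
       \<and> (\<forall>f (\<alpha>::real). Fplus f \<longrightarrow> 0 \<le> \<alpha> \<longrightarrow> \<alpha> * \<zeta> f = \<zeta> (\<lambda>S. \<alpha> * f S))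
       \<and> ((\<zeta> = Esub \<or> \<zeta> = Dsub
            \<or> (\<exists>l k. l < card (UNIV::'a set) \<and> k \<le> card (UNIV::'a set) \<and> \<zeta> = dlk l k)) \<longrightarrow>
          (\<forall>f \<epsilon>. Fplus f \<longrightarrow> \<not> submodular_sf f \<longrightarrow> 0 \<le> \<epsilon> \<longrightarrow> \<epsilon> < \<zeta> f \<longrightarrow>
             \<not> (\<exists>g. nonneg_sf g \<and> increasing_sf g \<and> submodular_sf g
                    \<and> supnorm (\<lambda>S. g S - f S) < \<epsilon> / 4)))"
proof -
  have sublinear: "sublinear \<zeta>"
    using cases by (auto intro: sublinear_Esub sublinear_Dsub sublinear_dlk sublinear_DeltaLK)
  have bound: "\<zeta> f \<le> 4 * supnorm (\<lambda>S. g S - f S)"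
    if "\<zeta> = Esub \<or> \<zeta> = Dsub
          \<or> (\<exists>l k. l < card (UNIV::'a set) \<and> k \<le> card (UNIV::'a set) \<and> \<zeta> = dlk l k)"
      and "submodular_sf g" "increasing_sf g" for f g
    using that by (auto intro: Esub_le_supnorm Dsub_le_supnorm dlk_le_supnorm)
  show ?thesis
  proof (intro conjI allI impI)
    show "\<zeta> (\<lambda>S. f1 S + f2 S) \<le> \<zeta> f1 + \<zeta> f2" for f1 f2
      using sublinear unfolding sublinear_def by blast
    show "\<alpha> * \<zeta> f = \<zeta> (\<lambda>S. \<alpha> * f S)" if "0 \<le> \<alpha>" for f \<alpha>
      using sublinear that unfolding sublinear_def by blast
  next
    fix f \<epsilon>
    assume kind: "\<zeta> = Esub \<or> \<zeta> = Dsub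
          \<or> (\<exists>l k. l < card (UNIV::'a set) \<and> k \<le> card (UNIV::'a set) \<and> \<zeta> = dlk l k)"
      and "\<epsilon> < \<zeta> f"
    then show "\<not> (\<exists>g. nonneg_sf g \<and> increasing_sf g \<and> submodular_sf g
                    \<and> supnorm (\<lambda>S. g S - f S) < \<epsilon> / 4)"
      using bound[OF kind, of _ f] by fastforce
  qed
qed

end
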